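(* Let $d>1$ be a square-free natural number and $k=\mathbb{Q}(\sqrt d, i)$. Let $a+ib\in\mathbb{Q}(i)$ (with $a,b$ rational, $a+ib\neq 0$) be such that $\sqrt{a^2+b^2}\notin\mathbb{Q}(\sqrt d)$, and let $\mathcal{H}$ be an ideal of $k$ with $\mathcal{H}^2=(a+ib)$. Then the class of $\mathcal{H}$ has order exactly $2$ in the class group of $k$ (i.e. $\mathcal{H}$ is not principal).
   Context: $i=\sqrt{-1}$. $(\alpha)$ denotes the principal ideal of $k$ generated by $\alpha$. *)

theory Defs
  imports Complex_Main "HOL-Computational_Algebra.Polynomial" "HOL-Computational_Algebra.Squarefree"
begin

definition alg_int :: "complex \<Rightarrow> bool" where
  "alg_int x \<longleftrightarrow> (\<exists>p :: int poly. lead_coeff p = 1 \<and> poly (map_poly of_int p) x = 0)"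

definition Kfield :: "nat \<Rightarrow> complex set" where
  "Kfield d = {of_rat p + of_rat q * complex_of_real (sqrt (real d))
               + \<i> * (of_rat r + of_rat s * complex_of_real (sqrt (real d))) | p q r s. True}"

definition Qsqrt :: "nat \<Rightarrow> real set" where
  "Qsqrt d = {of_rat p + of_rat q * sqrt (real d) | p q. True}"

definition Ok :: "nat \<Rightarrow> complex set" where
  "Ok d = {x \<in> Kfield d. alg_int x}"

definition frac_ideal :: "nat \<Rightarrow> complex set \<Rightarrow> bool" where
  "frac_ideal d H \<longleftrightarrow> H \<subseteq> Kfield d \<and> H \<noteq> {0} \<and> 0 \<in> H
     \<and> (\<forall>x\<in>H. \<forall>y\<in>H. x + y \<in> H)
     \<and> (\<forall>r\<in>Ok d. \<forall>x\<in>H. r * x \<in> H)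
     \<and> (\<exists>c\<in>Ok d. c \<noteq> 0 \<and> (\<forall>x\<in>H. c * x \<in> Ok d))"

definition ideal_prod :: "complex set \<Rightarrow> complex set \<Rightarrow> complex set" where
  "ideal_prod A B = {(\<Sum>j<n. x j * y j) | (n::nat) x y. \<forall>j<n. x j \<in> A \<and> y j \<in> B}"

definition principal_ideal :: "nat \<Rightarrow> complex \<Rightarrow> complex set" where
  "principal_ideal d \<alpha> = {\<alpha> * x | x. x \<in> Ok d}"

end

theory Submission
  imports Defs "Jordan_Normal_Form.Char_Poly" "HOL-Library.Nat_Bijection"
begin

text \<open>
  If \<open>H = (\<alpha>)\<close>, then \<open>\<alpha>\<^sup>2 = \<gamma> u\<close> with \<open>\<gamma> = a + ib\<close> and \<open>u\<close> a unit of \<open>O\<^sub>k\<close>. Let \<open>\<sigma>\<close> be the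
  automorphism of \<open>k\<close> with \<open>\<sigma>(\<surd>d) = -\<surd>d\<close> and \<open>\<sigma>(i) = -i\<close>; it fixes \<open>\<rat>(\<surd>-d)\<close> and is complex
  conjugation on \<open>\<rat>(i)\<close>. Then \<open>\<kappa> = \<alpha> \<sigma>(\<alpha>) = P + Q \<surd>-d\<close> with \<open>P, Q\<close> rational, and
  \<open>\<kappa>\<^sup>2 = m \<mu>\<close> with \<open>m = a\<^sup>2 + b\<^sup>2\<close> and the unit \<open>\<mu> = u \<sigma>(u)\<close>. As \<open>|\<mu>|\<close> is rational and both
  \<open>\<mu>\<close> and \<open>\<mu>\<^sup>-\<^sup>1\<close> are algebraic integers, \<open>|\<mu>| = 1\<close>, i.e. \<open>P\<^sup>2 + d Q\<^sup>2 = m\<close>; and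
  \<open>2 Re \<mu> = 2 (P\<^sup>2 - d Q\<^sup>2) / m\<close> is a rational algebraic integer in \<open>[-2, 2]\<close>. Each of its five
  possible values makes \<open>m\<close> a rational square or \<open>d\<close> times one (the value \<open>0\<close> would make \<open>\<surd>d\<close>
  rational), so \<open>\<surd>m \<in> \<rat>(\<surd>d)\<close>.

  That algebraic integers form a ring is shown by realising them as eigenvalues of integer
  matrices, closed under sums and products via tensor products.
\<close>

section \<open>Algebraic integers\<close>

lemma alg_int_iff_algebraic_int: "alg_int x \<longleftrightarrow> algebraic_int x"
  unfolding alg_int_def algebraic_int_altdef_ipoly by blast

definition int_eigenvalue :: "'a :: field \<Rightarrow> bool" where
  "int_eigenvalue x \<longleftrightarrow> (\<exists>(I :: nat set) (M :: nat \<Rightarrow> nat \<Rightarrow> int) v. finite I \<and> (\<exists>i\<in>I. v i \<noteq> 0) \<and>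
      (\<forall>i\<in>I. (\<Sum>j\<in>I. of_int (M i j) * v j) = x * v i))"

lemma int_eigenvalueI:
  fixes I :: "nat set" and M :: "nat \<Rightarrow> nat \<Rightarrow> int"
  assumes "finite I" "i0 \<in> I" "v i0 \<noteq> 0" "\<And>i. i \<in> I \<Longrightarrow> (\<Sum>j\<in>I. of_int (M i j) * v j) = x * v i"
  shows "int_eigenvalue x"
  unfolding int_eigenvalue_def using assms by blast

lemma int_eigenvalue_tensorI:
  fixes I J :: "nat set" and P :: "nat \<Rightarrow> nat \<Rightarrow> nat \<Rightarrow> nat \<Rightarrow> int"
  assumes "finite I" "finite J" "i0 \<in> I" "j0 \<in> J" "v i0 * w j0 \<noteq> 0"
    and eigen: "\<And>i j. i \<in> I \<Longrightarrow> j \<in> J \<Longrightarrow>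
      (\<Sum>i'\<in>I. \<Sum>j'\<in>J. of_int (P i j i' j') * (v i' * w j')) = x * (v i * w j)"
  shows "int_eigenvalue x"
proof -
  define K where "K = prod_encode ` (I \<times> J)"
  define M where "M = (\<lambda>k l. case (prod_decode k, prod_decode l) of ((i, j), (i', j')) \<Rightarrow> P i j i' j')"
  define z where "z = (\<lambda>k. case prod_decode k of (i, j) \<Rightarrow> v i * w j)"
  have inj: "inj_on prod_encode (I \<times> J)"
    by (meson inj_on_subset inj_prod_encode subset_UNIV)
  have "(\<Sum>l\<in>K. of_int (M k l) * z l) = x * z k" if "k \<in> K" for k
  proof -
    from that obtain i j where ij: "i \<in> I" "j \<in> J" "k = prod_encode (i, j)"
      unfolding K_def by auto
    have "(\<Sum>l\<in>K. of_int (M k l) * z l) = (\<Sum>(i', j')\<in>I \<times> J. of_int (P i j i' j') * (v i' * w j'))"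
      unfolding K_def by (subst sum.reindex[OF inj]) (simp add: M_def z_def ij case_prod_unfold)
    also have "\<dots> = x * z k"
      using eigen[OF ij(1,2)] by (simp add: sum.cartesian_product z_def ij)
    finally show ?thesis .
  qed
  then show ?thesis
    using assms(1-5) by (intro int_eigenvalueI[of K "prod_encode (i0, j0)" z M]) (auto simp: K_def z_def)
qed

lemma int_eigenvalue_times:
  assumes "int_eigenvalue x" "int_eigenvalue y"
  shows "int_eigenvalue (x * y)"
proof -
  obtain I :: "nat set" and M :: "nat \<Rightarrow> nat \<Rightarrow> int" and v i0
    where I: "finite I" "i0 \<in> I" "v i0 \<noteq> 0"
    and E: "\<And>i. i \<in> I \<Longrightarrow> (\<Sum>j\<in>I. of_int (M i j) * v j) = x * v i"
    using assms(1) unfolding int_eigenvalue_def by blast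
  obtain J :: "nat set" and N :: "nat \<Rightarrow> nat \<Rightarrow> int" and w j0
    where J: "finite J" "j0 \<in> J" "w j0 \<noteq> 0"
    and F: "\<And>i. i \<in> J \<Longrightarrow> (\<Sum>j\<in>J. of_int (N i j) * w j) = y * w i"
    using assms(2) unfolding int_eigenvalue_def by blast
  show ?thesis
  proof (rule int_eigenvalue_tensorI[of I J i0 j0 v w "\<lambda>i j i' j'. M i i' * N j j'"])
    fix i j assume "i \<in> I" "j \<in> J"
    have "(\<Sum>i'\<in>I. \<Sum>j'\<in>J. of_int (M i i' * N j j') * (v i' * w j'))
        = (\<Sum>i'\<in>I. of_int (M i i') * v i') * (\<Sum>j'\<in>J. of_int (N j j') * w j')"
      by (simp add: sum_product algebra_simps)
    also have "\<dots> = x * y * (v i * w j)"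
      using E[OF \<open>i \<in> I\<close>] F[OF \<open>j \<in> J\<close>] by (simp add: algebra_simps)
    finally show "(\<Sum>i'\<in>I. \<Sum>j'\<in>J. of_int (M i i' * N j j') * (v i' * w j')) = x * y * (v i * w j)" .
  qed (use I J in auto)
qed

lemma int_eigenvalue_plus:
  assumes "int_eigenvalue x" "int_eigenvalue y"
  shows "int_eigenvalue (x + y)"
proof -
  obtain I :: "nat set" and M :: "nat \<Rightarrow> nat \<Rightarrow> int" and v i0
    where I: "finite I" "i0 \<in> I" "v i0 \<noteq> 0"
    and E: "\<And>i. i \<in> I \<Longrightarrow> (\<Sum>j\<in>I. of_int (M i j) * v j) = x * v i"
    using assms(1) unfolding int_eigenvalue_def by blast
  obtain J :: "nat set" and N :: "nat \<Rightarrow> nat \<Rightarrow> int" and w j0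
    where J: "finite J" "j0 \<in> J" "w j0 \<noteq> 0"
    and F: "\<And>i. i \<in> J \<Longrightarrow> (\<Sum>j\<in>J. of_int (N i j) * w j) = y * w i"
    using assms(2) unfolding int_eigenvalue_def by blast
  define P where "P = (\<lambda>i j i' j'. (if j' = j then M i i' else 0) + (if i' = i then N j j' else 0))"
  show ?thesis
  proof (rule int_eigenvalue_tensorI[of I J i0 j0 v w P])
    fix i j assume ij: "i \<in> I" "j \<in> J"
    have "of_int (P i j i' j') * (v i' * w j') = (if j' = j then of_int (M i i') * v i' * w j else 0)
        + (if i' = i then v i * (of_int (N j j') * w j') else 0)" for i' j'
      by (simp add: P_def algebra_simps)
    then have "(\<Sum>i'\<in>I. \<Sum>j'\<in>J. of_int (P i j i' j') * (v i' * w j'))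
        = (\<Sum>i'\<in>I. \<Sum>j'\<in>J. if j' = j then of_int (M i i') * v i' * w j else 0)
        + (\<Sum>j'\<in>J. \<Sum>i'\<in>I. if i' = i then v i * (of_int (N j j') * w j') else 0)"
      by (simp add: sum.distrib sum.swap[of _ J I])
    also have "\<dots> = (\<Sum>i'\<in>I. of_int (M i i') * v i') * w j + v i * (\<Sum>j'\<in>J. of_int (N j j') * w j')"
      using I J ij by (simp add: sum.delta' sum_distrib_left sum_distrib_right)
    also have "\<dots> = (x + y) * (v i * w j)"
      using E[OF ij(1)] F[OF ij(2)] by (simp add: algebra_simps)
    finally show "(\<Sum>i'\<in>I. \<Sum>j'\<in>J. of_int (P i j i' j') * (v i' * w j')) = (x + y) * (v i * w j)" .
  qed (use I J in auto)
qed

lemma int_eigenvalue_imp_eigenvalue_int_mat: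
  fixes x :: "'a :: field"
  assumes "int_eigenvalue x"
  obtains n and A :: "int mat" where "A \<in> carrier_mat n n" "eigenvalue (map_mat of_int A) x"
proof -
  obtain I :: "nat set" and M :: "nat \<Rightarrow> nat \<Rightarrow> int" and v i0 where I: "finite I" "i0 \<in> I" "v i0 \<noteq> 0"
    and E: "\<And>i. i \<in> I \<Longrightarrow> (\<Sum>j\<in>I. of_int (M i j) * v j) = x * v i"
    using assms unfolding int_eigenvalue_def by blast
  define c where "c = card I"
  obtain h where h: "bij_betw h {0..<c} I"
    using ex_bij_betw_nat_finite[OF I(1)] c_def by blast
  define A :: "int mat" where "A = mat c c (\<lambda>(a, b). M (h a) (h b))"
  define V :: "'a vec" where "V = vec c (\<lambda>a. v (h a))"
  obtain a0 where a0: "a0 < c" "h a0 = i0"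
    using h I(2) by (auto simp: bij_betw_def)
  have "V \<noteq> 0\<^sub>v c"
    using a0 I(3) by (auto simp: V_def vec_eq_iff)
  moreover have "map_mat of_int A *\<^sub>v V = x \<cdot>\<^sub>v V"
  proof (rule eq_vecI)
    fix a assume "a < dim_vec (x \<cdot>\<^sub>v V)"
    then have a: "a < c" by (simp add: V_def)
    then have "h a \<in> I" using h by (auto simp: bij_betw_def)
    have "(map_mat of_int A *\<^sub>v V) $ a = (\<Sum>b\<in>{0..<c}. of_int (M (h a) (h b)) * v (h b))"
      using a by (simp add: A_def V_def mult_mat_vec_def scalar_prod_def)
    also have "\<dots> = (\<Sum>j\<in>I. of_int (M (h a) j) * v j)"
      using sum.reindex_bij_betw[OF h, of "\<lambda>j. of_int (M (h a) j) * v j"] by simp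
    also have "\<dots> = x * v (h a)" using E[OF \<open>h a \<in> I\<close>] .
    finally show "(map_mat of_int A *\<^sub>v V) $ a = (x \<cdot>\<^sub>v V) $ a" using a by (simp add: V_def)
  qed (simp add: A_def V_def)
  ultimately have "eigenvalue (map_mat of_int A) x"
    unfolding eigenvalue_def eigenvector_def by (intro exI[of _ V]) (auto simp: A_def V_def)
  moreover have "A \<in> carrier_mat c c"
    by (simp add: A_def)
  ultimately show thesis
    using that by blast
qed

lemma eigenvalue_of_int_mat_imp_algebraic_int:
  fixes x :: "'a :: field_char_0"
  assumes A: "A \<in> carrier_mat n n" and "eigenvalue (map_mat of_int A :: 'a mat) x"
  shows "algebraic_int x"
proof -
  have "(map_mat of_int A :: 'a mat) \<in> carrier_mat n n"
    using A by simp
  then have "poly (char_poly (map_mat of_int A :: 'a mat)) x = 0"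
    using assms(2) eigenvalue_root_char_poly by blast
  moreover have "char_poly (map_mat of_int A :: 'a mat) = map_poly of_int (char_poly A)"
    using of_int_hom.char_poly_hom[OF A] by simp
  moreover have "lead_coeff (char_poly A) = 1"
    using degree_monic_char_poly[OF A] by simp
  ultimately show ?thesis
    unfolding algebraic_int_altdef_ipoly by (intro exI[of _ "char_poly A"]) simp
qed

lemma int_eigenvalue_imp_algebraic_int:
  fixes x :: "'a :: field_char_0"
  assumes "int_eigenvalue x"
  shows "algebraic_int x"
  using assms by (elim int_eigenvalue_imp_eigenvalue_int_mat) (rule eigenvalue_of_int_mat_imp_algebraic_int)

text \<open>The witness is the companion matrix of a monic equation of \<open>x\<close>, with eigenvector \<open>(1, x, \<dots>, x\<^sup>n\<^sup>-\<^sup>1)\<close>.\<close>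
lemma algebraic_int_imp_int_eigenvalue:
  fixes x :: "'a :: field_char_0"
  assumes "algebraic_int x"
  shows "int_eigenvalue x"
proof -
  obtain p :: "int poly" where p: "lead_coeff p = 1" "poly (map_poly of_int p) x = 0"
    using assms unfolding algebraic_int_altdef_ipoly by blast
  define n where "n = degree p"
  have "n > 0"
    using p by (cases "n = 0") (auto simp: n_def poly_altdef degree_map_poly)
  define M :: "nat \<Rightarrow> nat \<Rightarrow> int"
    where "M = (\<lambda>i j. if Suc i < n then (if j = Suc i then 1 else 0) else - coeff p j)"
  have "(\<Sum>j<n. of_int (coeff p j) * x ^ j) + x ^ n = (\<Sum>j\<le>n. of_int (coeff p j) * x ^ j)"
    using p(1) by (simp add: lessThan_Suc_atMost[symmetric] n_def)
  also have "\<dots> = 0"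
    using p(2) by (simp add: poly_altdef n_def degree_map_poly)
  finally have last_row: "(\<Sum>j<n. of_int (- coeff p j) * x ^ j) = x ^ n"
    by (simp add: sum_negf add_eq_0_iff)
  have "(\<Sum>j<n. of_int (M i j) * x ^ j) = x * x ^ i" if "i < n" for i
  proof (cases "Suc i < n")
    case True
    then have "(\<Sum>j<n. of_int (M i j) * x ^ j) = (\<Sum>j<n. if j = Suc i then x ^ Suc i else 0)"
      by (intro sum.cong) (auto simp: M_def)
    then show ?thesis using True by simp
  next
    case False
    with that have "Suc i = n" by simp
    moreover have "(\<Sum>j<n. of_int (M i j) * x ^ j) = (\<Sum>j<n. of_int (- coeff p j) * x ^ j)"
      using False by (intro sum.cong) (auto simp: M_def)
    ultimately show ?thesis using last_row by (metis power_Suc)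
  qed
  then show ?thesis
    using \<open>n > 0\<close> by (intro int_eigenvalueI[of "{..<n}" 0 "\<lambda>i. x ^ i" M]) auto
qed

lemma algebraic_int_plus:
  fixes x y :: "'a :: field_char_0"
  shows "algebraic_int x \<Longrightarrow> algebraic_int y \<Longrightarrow> algebraic_int (x + y)"
  by (meson algebraic_int_imp_int_eigenvalue int_eigenvalue_imp_algebraic_int int_eigenvalue_plus)

lemma algebraic_int_times:
  fixes x y :: "'a :: field_char_0"
  shows "algebraic_int x \<Longrightarrow> algebraic_int y \<Longrightarrow> algebraic_int (x * y)"
  by (meson algebraic_int_imp_int_eigenvalue int_eigenvalue_imp_algebraic_int int_eigenvalue_times)

lemma of_rat_in_Ints_iff: "(of_rat x :: 'a :: field_char_0) \<in> \<int> \<longleftrightarrow> x \<in> \<int>"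
proof
  assume "(of_rat x :: 'a) \<in> \<int>"
  then obtain n where "(of_rat x :: 'a) = of_rat (of_int n)"
    by (auto elim: Ints_cases)
  then show "x \<in> \<int>"
    unfolding of_rat_eq_iff by simp
qed (auto elim: Ints_cases)

lemma cmod_eq_1_if_algebraic_int_unit:
  fixes \<mu> \<nu> :: complex
  assumes "algebraic_int \<mu>" "algebraic_int \<nu>" "\<mu> * \<nu> = 1" and "(cmod \<mu>)\<^sup>2 \<in> \<rat>"
  shows "cmod \<mu> = 1"
proof -
  have norm_square_ge_1: "(cmod z)\<^sup>2 \<ge> 1" if "algebraic_int z" "(cmod z)\<^sup>2 \<in> \<rat>" "z \<noteq> 0" for z
  proof -
    have "algebraic_int (z * cnj z)"
      using that(1) by (intro algebraic_int_times) auto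
    then have "algebraic_int ((cmod z)\<^sup>2)"
      by (simp only: complex_norm_square[symmetric] algebraic_int_of_real_iff)
    then have "(cmod z)\<^sup>2 \<in> \<int>"
      using that(2) by (rule rational_algebraic_int_is_int)
    then show ?thesis
      using that(3) by (metis Ints_nonzero_abs_ge1 abs_power2 zero_eq_power2 norm_eq_zero)
  qed
  have "\<nu> = inverse \<mu>"
    using assms(3) by (rule inverse_unique[symmetric])
  then have "\<mu> \<noteq> 0" "\<nu> \<noteq> 0" "cmod \<nu> = inverse (cmod \<mu>)"
    using assms(3) by (auto simp: norm_inverse)
  then have "(cmod \<nu>)\<^sup>2 = inverse ((cmod \<mu>)\<^sup>2)"
    by (simp add: power_inverse)
  then have "inverse ((cmod \<mu>)\<^sup>2) \<ge> 1"
    using norm_square_ge_1[of \<nu>] assms(2,4) \<open>\<nu> \<noteq> 0\<close> by simp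
  moreover have "(cmod \<mu>)\<^sup>2 \<ge> 1"
    using norm_square_ge_1[of \<mu>] assms(1,4) \<open>\<mu> \<noteq> 0\<close> by simp
  ultimately have "(cmod \<mu>)\<^sup>2 = 1"
    by (simp add: one_le_inverse_iff)
  then show ?thesis
    using norm_ge_zero[of \<mu>] by (auto simp: power2_eq_1_iff)
qed

lemma cmod_Re_of_square_eq:
  fixes X Y c :: real
  assumes "c > 0" "(Complex X Y)\<^sup>2 = of_real c * \<mu>"
  shows "cmod \<mu> = (X\<^sup>2 + Y\<^sup>2) / c" and "Re \<mu> = (X\<^sup>2 - Y\<^sup>2) / c"
proof -
  have "c * cmod \<mu> = cmod ((Complex X Y)\<^sup>2)"
    using assms by (simp add: norm_mult)
  also have "\<dots> = X\<^sup>2 + Y\<^sup>2"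
    by (simp add: norm_power complex_norm)
  finally show "cmod \<mu> = (X\<^sup>2 + Y\<^sup>2) / c"
    using assms(1) by (simp add: field_simps)
  have "c * Re \<mu> = Re ((Complex X Y)\<^sup>2)"
    using assms(2) by simp
  also have "\<dots> = X\<^sup>2 - Y\<^sup>2"
    by (simp add: power2_eq_square)
  finally show "Re \<mu> = (X\<^sup>2 - Y\<^sup>2) / c"
    using assms(1) by (simp add: field_simps)
qed

section \<open>The real quadratic field\<close>

lemma sqrt_squarefree_irrational:
  assumes "d > 1" "squarefree d"
  shows "sqrt (real d) \<notin> \<rat>"
proof
  assume "sqrt (real d) \<in> \<rat>"
  moreover have "algebraic_int (sqrt (real d))"
    by (intro algebraic_int_sqrt) simp
  ultimately obtain n where n: "sqrt (real d) = of_int n"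
    using rational_algebraic_int_is_int by (blast elim: Ints_cases)
  have "real d = (sqrt (real d))\<^sup>2" by simp
  also have "\<dots> = of_int (n\<^sup>2)" by (simp add: n)
  finally have "int d = n\<^sup>2" by linarith
  then have "d = (nat \<bar>n\<bar>)\<^sup>2" by (simp add: nat_power_eq[symmetric])
  then have "nat \<bar>n\<bar> dvd 1"
    using assms(2) unfolding squarefree_def by simp
  then show False
    using \<open>d = (nat \<bar>n\<bar>)\<^sup>2\<close> assms(1) by simp
qed

lemma sqrt_of_rat_square_in_Qsqrt: "sqrt (of_rat (x\<^sup>2)) \<in> Qsqrt d"
proof -
  have "sqrt (of_rat (x\<^sup>2)) = of_rat \<bar>x\<bar> + of_rat 0 * sqrt (real d)"
    by (simp add: of_rat_power abs_if of_rat_minus)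
  then show ?thesis
    unfolding Qsqrt_def by blast
qed

lemma sqrt_of_rat_d_square_in_Qsqrt: "sqrt (of_rat (of_nat d * x\<^sup>2)) \<in> Qsqrt d"
proof -
  have "sqrt (of_rat (of_nat d * x\<^sup>2)) = of_rat 0 + of_rat \<bar>x\<bar> * sqrt (real d)"
    by (simp add: of_rat_power of_rat_mult real_sqrt_mult abs_if of_rat_minus)
  then show ?thesis
    unfolding Qsqrt_def by blast
qed

section \<open>The field \<open>k\<close> and its ring of integers\<close>

lemma of_real_of_rat: "(of_real (of_rat r) :: 'a :: real_field) = of_rat r"
  by (cases r) (simp add: of_rat_rat of_real_divide)

definition kelem :: "nat \<Rightarrow> rat \<Rightarrow> rat \<Rightarrow> rat \<Rightarrow> rat \<Rightarrow> complex" where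
  "kelem d p q r s = Complex (of_rat p + of_rat q * sqrt (real d)) (of_rat r + of_rat s * sqrt (real d))"

lemma Kfield_iff: "z \<in> Kfield d \<longleftrightarrow> (\<exists>p q r s. z = kelem d p q r s)"
proof -
  have "of_rat p + of_rat q * complex_of_real (sqrt (real d))
      + \<i> * (of_rat r + of_rat s * complex_of_real (sqrt (real d))) = kelem d p q r s" for p q r s
    by (simp add: kelem_def complex_eq_iff of_real_of_rat[where 'a = complex, symmetric])
  then show ?thesis
    unfolding Kfield_def by auto
qed

lemma kelem_plus: "kelem d p q r s + kelem d p' q' r' s' = kelem d (p + p') (q + q') (r + r') (s + s')"
  by (simp add: kelem_def complex_eq_iff of_rat_add algebra_simps)

lemma kelem_times:
  "kelem d p q r s * kelem d p' q' r' s' =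
     kelem d (p * p' + of_nat d * q * q' - r * r' - of_nat d * s * s') (p * q' + q * p' - r * s' - s * r')
       (p * r' + of_nat d * q * s' + r * p' + of_nat d * s * q') (p * s' + q * r' + r * q' + s * p')"
  by (simp add: kelem_def complex_eq_iff of_rat_add of_rat_diff of_rat_mult algebra_simps)

lemma of_int_eq_kelem: "of_int n = kelem d (of_int n) 0 0 0"
  by (simp add: kelem_def complex_eq_iff)

lemma Complex_of_rat_eq_kelem: "Complex (of_rat a) (of_rat b) = kelem d a 0 b 0"
  by (simp add: kelem_def)

lemma Complex_of_rat_in_Kfield: "Complex (of_rat a) (of_rat b) \<in> Kfield d"
  unfolding Kfield_iff using Complex_of_rat_eq_kelem by blast

lemma Kfield_plus: "z \<in> Kfield d \<Longrightarrow> w \<in> Kfield d \<Longrightarrow> z + w \<in> Kfield d"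
  unfolding Kfield_iff by (auto simp: kelem_plus) blast

lemma Kfield_times: "z \<in> Kfield d \<Longrightarrow> w \<in> Kfield d \<Longrightarrow> z * w \<in> Kfield d"
  unfolding Kfield_iff by (auto simp: kelem_times) blast

lemma of_int_in_Kfield: "of_int n \<in> Kfield d"
  unfolding Kfield_iff using of_int_eq_kelem by blast

lemma zero_in_Kfield: "0 \<in> Kfield d"
  using of_int_in_Kfield[of 0] by simp

lemma poly_of_int_in_Kfield: "z \<in> Kfield d \<Longrightarrow> poly (map_poly of_int P) z \<in> Kfield d"
  by (induction P) (auto simp: map_poly_pCons zero_in_Kfield intro: Kfield_plus Kfield_times of_int_in_Kfield)

lemma Ok_plus: "x \<in> Ok d \<Longrightarrow> y \<in> Ok d \<Longrightarrow> x + y \<in> Ok d"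
  unfolding Ok_def alg_int_iff_algebraic_int by (auto intro: Kfield_plus algebraic_int_plus)

lemma Ok_times: "x \<in> Ok d \<Longrightarrow> y \<in> Ok d \<Longrightarrow> x * y \<in> Ok d"
  unfolding Ok_def alg_int_iff_algebraic_int by (auto intro: Kfield_times algebraic_int_times)

lemma of_int_in_Ok: "of_int n \<in> Ok d"
  unfolding Ok_def alg_int_iff_algebraic_int using of_int_in_Kfield by auto

lemma one_in_Ok: "1 \<in> Ok d"
  using of_int_in_Ok[of 1] by simp

lemma sum_in_Ok: "(\<And>j. j \<in> A \<Longrightarrow> f j \<in> Ok d) \<Longrightarrow> sum f A \<in> Ok d"
  using of_int_in_Ok[of 0] by (induction A rule: infinite_finite_induct) (auto intro: Ok_plus)

section \<open>Principal ideals\<close>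

lemma ideal_prod_principal_ideal:
  "ideal_prod (principal_ideal d \<alpha>) (principal_ideal d \<beta>) = principal_ideal d (\<alpha> * \<beta>)"
proof (intro equalityI subsetI)
  fix z assume "z \<in> ideal_prod (principal_ideal d \<alpha>) (principal_ideal d \<beta>)"
  then obtain n :: nat and x y where z: "z = (\<Sum>j<n. x j * y j)"
    and xy: "\<forall>j<n. x j \<in> principal_ideal d \<alpha> \<and> y j \<in> principal_ideal d \<beta>"
    unfolding ideal_prod_def by blast
  then have "\<forall>j<n. \<exists>x' y'. x' \<in> Ok d \<and> x j = \<alpha> * x' \<and> y' \<in> Ok d \<and> y j = \<beta> * y'"
    unfolding principal_ideal_def by blast
  then obtain x' y' where x'y': "\<forall>j<n. x' j \<in> Ok d \<and> x j = \<alpha> * x' j \<and> y' j \<in> Ok d \<and> y j = \<beta> * y' j"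
    by metis
  have "z = \<alpha> * \<beta> * (\<Sum>j<n. x' j * y' j)"
    unfolding z sum_distrib_left by (rule sum.cong) (simp_all add: x'y')
  moreover have "(\<Sum>j<n. x' j * y' j) \<in> Ok d"
    using x'y' by (intro sum_in_Ok Ok_times) auto
  ultimately show "z \<in> principal_ideal d (\<alpha> * \<beta>)"
    unfolding principal_ideal_def by blast
next
  fix z assume "z \<in> principal_ideal d (\<alpha> * \<beta>)"
  then obtain x where x: "x \<in> Ok d" "z = \<alpha> * \<beta> * x"
    unfolding principal_ideal_def by blast
  have "\<alpha> \<in> principal_ideal d \<alpha>" "\<beta> * x \<in> principal_ideal d \<beta>"
    unfolding principal_ideal_def using x(1) one_in_Ok by force+
  moreover have "z = (\<Sum>j<(1::nat). \<alpha> * (\<beta> * x))"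
    using x(2) by (simp add: mult.assoc)
  ultimately show "z \<in> ideal_prod (principal_ideal d \<alpha>) (principal_ideal d \<beta>)"
    unfolding ideal_prod_def mem_Collect_eq
    by (intro exI[of _ "1::nat"] exI[of _ "\<lambda>_. \<alpha>"] exI[of _ "\<lambda>_. \<beta> * x"]) simp
qed

lemma principal_ideal_eq_imp_associated:
  assumes "principal_ideal d \<alpha> = principal_ideal d \<beta>" "\<beta> \<noteq> 0"
  obtains u v where "u \<in> Ok d" "v \<in> Ok d" "u * v = 1" "\<alpha> = \<beta> * u"
proof -
  have "\<gamma> \<in> principal_ideal d \<gamma>" for \<gamma>
    unfolding principal_ideal_def using one_in_Ok by force
  then obtain u v where u: "u \<in> Ok d" "\<alpha> = \<beta> * u" and v: "v \<in> Ok d" "\<beta> = \<alpha> * v"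
    using assms(1) unfolding principal_ideal_def by blast
  then have "\<beta> * (u * v) = \<beta> * 1"
    by (simp add: mult.assoc[symmetric])
  then have "u * v = 1"
    using assms(2) by simp
  with u v show thesis by (intro that)
qed

section \<open>The automorphism fixing \<open>\<rat>(\<surd>-d)\<close>\<close>

text \<open>The automorphism \<open>\<surd>d \<mapsto> -\<surd>d\<close>, \<open>i \<mapsto> -i\<close> of \<open>k\<close>. Its value outside \<open>Kfield d\<close>, or when
  \<open>\<surd>d\<close> is rational (coordinates not unique), is unspecified.\<close>
definition Kconj :: "nat \<Rightarrow> complex \<Rightarrow> complex" where
  "Kconj d z = (THE w. \<exists>p q r s. z = kelem d p q r s \<and> w = kelem d p (-q) (-r) s)"

context
  fixes d :: nat
  assumes sqrt_irrational: "sqrt (real d) \<notin> \<rat>"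
begin

lemma Qsqrt_coords_unique:
  assumes "of_rat p + of_rat q * sqrt (real d) = of_rat p' + of_rat q' * sqrt (real d)"
  shows "p = p' \<and> q = q'"
proof (cases "q = q'")
  case False
  with assms have "sqrt (real d) = of_rat ((p - p') / (q' - q))"
    by (simp add: of_rat_divide of_rat_diff field_simps)
  with sqrt_irrational show ?thesis by simp
qed (use assms in simp)

lemma kelem_inject:
  "kelem d p q r s = kelem d p' q' r' s' \<longleftrightarrow> p = p' \<and> q = q' \<and> r = r' \<and> s = s'"
  unfolding kelem_def complex_eq_iff using Qsqrt_coords_unique by auto

lemma Kconj_kelem: "Kconj d (kelem d p q r s) = kelem d p (-q) (-r) s"
  unfolding Kconj_def by (rule the_equality) (auto simp: kelem_inject)

lemma Kconj_plus: "z \<in> Kfield d \<Longrightarrow> w \<in> Kfield d \<Longrightarrow> Kconj d (z + w) = Kconj d z + Kconj d w"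
  unfolding Kfield_iff by (auto simp: kelem_plus Kconj_kelem)

lemma Kconj_times: "z \<in> Kfield d \<Longrightarrow> w \<in> Kfield d \<Longrightarrow> Kconj d (z * w) = Kconj d z * Kconj d w"
  unfolding Kfield_iff by (auto simp: kelem_times Kconj_kelem algebra_simps)

lemma Kconj_of_int: "Kconj d (of_int n) = of_int n"
  using of_int_eq_kelem[of n d] Kconj_kelem by simp

lemma Kconj_0: "Kconj d 0 = 0"
  using Kconj_of_int[of 0] by simp

lemma Kconj_Complex_of_rat: "Kconj d (Complex (of_rat a) (of_rat b)) = cnj (Complex (of_rat a) (of_rat b))"
  unfolding Complex_of_rat_eq_kelem[of a b d] Kconj_kelem by (simp add: kelem_def of_rat_minus complex_eq_iff)

lemma Kconj_poly_of_int:
  "z \<in> Kfield d \<Longrightarrow> Kconj d (poly (map_poly of_int P) z) = poly (map_poly of_int P) (Kconj d z)"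
  by (induction P)
    (simp_all add: map_poly_pCons Kconj_0 zero_in_Kfield Kconj_of_int Kconj_plus Kconj_times poly_of_int_in_Kfield
      of_int_in_Kfield Kfield_times)

lemma algebraic_int_Kconj:
  assumes "z \<in> Kfield d" "algebraic_int z"
  shows "algebraic_int (Kconj d z)"
proof -
  obtain P :: "int poly" where P: "poly (map_poly of_int P) z = 0" "lead_coeff P = 1"
    using assms(2) unfolding algebraic_int_altdef_ipoly by blast
  have "poly (map_poly of_int P) (Kconj d z) = Kconj d (poly (map_poly of_int P) z)"
    by (rule Kconj_poly_of_int[OF assms(1), symmetric])
  also have "\<dots> = 0"
    by (simp add: P(1) Kconj_0)
  finally show ?thesis
    unfolding algebraic_int_altdef_ipoly using P(2) by blast
qed

lemma sqrt_in_Qsqrt_if_trace_integral: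
  fixes P Q m :: rat
  assumes "m > 0" and norm: "P\<^sup>2 + of_nat d * Q\<^sup>2 = m"
    and trace: "2 * (P\<^sup>2 - of_nat d * Q\<^sup>2) / m \<in> \<int>"
  shows "sqrt (of_rat m) \<in> Qsqrt d"
proof -
  obtain k where k: "of_int k * m = 2 * P\<^sup>2 - 2 * (of_nat d * Q\<^sup>2)"
    using trace \<open>m > 0\<close> by (elim Ints_cases) (simp add: field_simps)
  have "0 \<le> P\<^sup>2" "0 \<le> of_nat d * Q\<^sup>2" by simp_all
  then have upper: "of_int k * m \<le> of_int 2 * m" and lower: "of_int (- 2) * m \<le> of_int k * m"
    using k norm by linarith+
  have "k \<le> 2" "- 2 \<le> k"
    using mult_right_le_imp_le[OF upper \<open>m > 0\<close>] mult_right_le_imp_le[OF lower \<open>m > 0\<close>]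
    by (simp_all only: of_int_le_iff)
  then consider "k = 2" | "k = 1" | "k = 0" | "k = -1" | "k = -2"
    by linarith
  then show ?thesis
  proof cases
    case 1
    then have "m = P\<^sup>2" using k norm by simp
    then show ?thesis using sqrt_of_rat_square_in_Qsqrt by simp
  next
    case 2
    then have "m = of_nat d * (2 * Q)\<^sup>2" using k norm by (simp add: power_mult_distrib)
    then show ?thesis using sqrt_of_rat_d_square_in_Qsqrt[of d "2 * Q"] by (simp only:)
  next
    case 3
    then have "P\<^sup>2 = of_nat d * Q\<^sup>2" using k by simp
    moreover have "Q \<noteq> 0"
      using calculation norm \<open>m > 0\<close> by auto
    ultimately have "sqrt (real d) = sqrt (of_rat ((P / Q)\<^sup>2))"
      by (simp add: power_divide)
    also have "\<dots> \<in> \<rat>"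
      using sqrt_of_rat_square_in_Qsqrt[of "P / Q" 0] by (auto simp: Qsqrt_def)
    finally show ?thesis
      using sqrt_irrational by contradiction
  next
    case 4
    then have "m = (2 * P)\<^sup>2" using k norm by (simp add: power_mult_distrib)
    then show ?thesis using sqrt_of_rat_square_in_Qsqrt[of "2 * P" d] by (simp only:)
  next
    case 5
    then have "m = of_nat d * Q\<^sup>2" using k norm by simp
    then show ?thesis using sqrt_of_rat_d_square_in_Qsqrt by simp
  qed
qed

lemma times_Kconj_kelem:
  "kelem d p q r s * Kconj d (kelem d p q r s) =
     Complex (of_rat (p\<^sup>2 - of_nat d * q\<^sup>2 + r\<^sup>2 - of_nat d * s\<^sup>2)) (of_rat (2 * (p * s - q * r)) * sqrt (real d))"
  unfolding Kconj_kelem kelem_times by (simp add: kelem_def power2_eq_square algebra_simps)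

lemma relative_norm_of_unit:
  assumes "u \<in> Ok d" "v \<in> Ok d" "u * v = 1"
  shows "algebraic_int (u * Kconj d u)" "algebraic_int (v * Kconj d v)"
    and "(u * Kconj d u) * (v * Kconj d v) = 1"
proof -
  have K: "u \<in> Kfield d" "v \<in> Kfield d" and int: "algebraic_int u" "algebraic_int v"
    using assms(1,2) by (auto simp: Ok_def alg_int_iff_algebraic_int)
  show "algebraic_int (u * Kconj d u)" "algebraic_int (v * Kconj d v)"
    using K int by (auto intro: algebraic_int_times algebraic_int_Kconj)
  have "(u * Kconj d u) * (v * Kconj d v) = (u * v) * Kconj d (u * v)"
    using K by (simp add: Kconj_times algebra_simps)
  also have "\<dots> = 1"
    using assms(3) Kconj_of_int[of 1] by simp
  finally show "(u * Kconj d u) * (v * Kconj d v) = 1" .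
qed

lemma square_times_Kconj_eq:
  assumes "\<alpha> \<in> Kfield d" "u \<in> Kfield d" and square: "\<alpha> * \<alpha> = Complex (of_rat a) (of_rat b) * u"
  shows "(\<alpha> * Kconj d \<alpha>)\<^sup>2 = of_real (of_rat (a\<^sup>2 + b\<^sup>2)) * (u * Kconj d u)"
proof -
  define \<gamma> where "\<gamma> = Complex (of_rat a) (of_rat b)"
  have "(\<alpha> * Kconj d \<alpha>)\<^sup>2 = (\<alpha> * \<alpha>) * Kconj d (\<alpha> * \<alpha>)"
    using assms(1) by (simp add: Kconj_times power2_eq_square algebra_simps)
  also have "\<dots> = (\<gamma> * u) * (Kconj d \<gamma> * Kconj d u)"
    using assms(2) Complex_of_rat_in_Kfield by (simp add: square \<gamma>_def Kconj_times)
  also have "\<dots> = (\<gamma> * cnj \<gamma>) * (u * Kconj d u)"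
    by (simp add: \<gamma>_def Kconj_Complex_of_rat algebra_simps)
  also have "\<gamma> * cnj \<gamma> = of_real (of_rat (a\<^sup>2 + b\<^sup>2))"
    by (simp add: \<gamma>_def complex_mult_cnj of_rat_add of_rat_power)
  finally show ?thesis .
qed

lemma sqrt_norm_in_Qsqrt_if_square_associated:
  assumes "\<alpha> \<in> Kfield d" "u \<in> Ok d" "v \<in> Ok d" "u * v = 1"
    and square: "\<alpha> * \<alpha> = Complex (of_rat a) (of_rat b) * u"
  shows "sqrt ((of_rat a)\<^sup>2 + (of_rat b)\<^sup>2) \<in> Qsqrt d"
proof -
  define m where "m = a\<^sup>2 + b\<^sup>2"
  have sqrt_m: "sqrt ((of_rat a)\<^sup>2 + (of_rat b)\<^sup>2) = sqrt (of_rat m)"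
    by (simp add: m_def of_rat_add of_rat_power)
  have "m \<ge> 0"
    by (simp add: m_def)
  then consider "m = 0" | "m > 0"
    by (cases "m = 0") auto
  then show ?thesis
  proof cases
    case 1
    then show ?thesis
      using sqrt_of_rat_square_in_Qsqrt[of 0 d] by (simp add: sqrt_m)
  next
    case 2
    obtain p q r s where \<alpha>: "\<alpha> = kelem d p q r s"
      using assms(1) Kfield_iff by blast
    define P where "P = p\<^sup>2 - of_nat d * q\<^sup>2 + r\<^sup>2 - of_nat d * s\<^sup>2"
    define Q where "Q = 2 * (p * s - q * r)"
    define \<mu> where "\<mu> = u * Kconj d u"
    have \<kappa>: "(Complex (of_rat P) (of_rat Q * sqrt (real d)))\<^sup>2 = of_real (of_rat m) * \<mu>"
      using square_times_Kconj_eq[OF assms(1) _ square] assms(2)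
      by (simp add: Ok_def \<alpha> times_Kconj_kelem P_def Q_def \<mu>_def m_def)
    have "cmod \<mu> = of_rat ((P\<^sup>2 + of_nat d * Q\<^sup>2) / m)"
      using cmod_Re_of_square_eq(1)[OF _ \<kappa>] \<open>m > 0\<close>
      by (simp add: of_rat_add of_rat_mult of_rat_divide of_rat_power power_mult_distrib)
    moreover have "cmod \<mu> = 1"
      using relative_norm_of_unit[OF assms(2-4)] calculation
      by (intro cmod_eq_1_if_algebraic_int_unit) (auto simp: \<mu>_def)
    ultimately have norm: "P\<^sup>2 + of_nat d * Q\<^sup>2 = m"
      using \<open>m > 0\<close> by simp
    have "2 * Re \<mu> = of_rat (2 * (P\<^sup>2 - of_nat d * Q\<^sup>2) / m)"
      using cmod_Re_of_square_eq(2)[OF _ \<kappa>] \<open>m > 0\<close>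
      by (simp add: of_rat_diff of_rat_mult of_rat_divide of_rat_power power_mult_distrib)
    moreover have "algebraic_int (\<mu> + cnj \<mu>)"
      using relative_norm_of_unit(1)[OF assms(2-4)]
      by (intro algebraic_int_plus algebraic_int_cnj) (simp_all add: \<mu>_def)
    then have "algebraic_int (2 * Re \<mu>)"
      by (simp only: complex_add_cnj algebraic_int_of_real_iff)
    ultimately have "2 * (P\<^sup>2 - of_nat d * Q\<^sup>2) / m \<in> \<int>"
      using rational_algebraic_int_is_int of_rat_in_Ints_iff by (metis Rats_of_rat)
    then show ?thesis
      using sqrt_in_Qsqrt_if_trace_integral[OF \<open>m > 0\<close> norm] by (simp add: sqrt_m)
  qed
qed

end

theorem mainTheorem1:
  fixes d :: nat and a b :: rat and H :: "complex set"
  assumes "d > 1" and "squarefree d"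
    and "Complex (of_rat a) (of_rat b) \<noteq> 0"
    and "sqrt ((of_rat a)\<^sup>2 + (of_rat b)\<^sup>2) \<notin> Qsqrt d"
    and "frac_ideal d H"
    and "ideal_prod H H = principal_ideal d (Complex (of_rat a) (of_rat b))"
  shows "\<not> (\<exists>\<alpha>\<in>Kfield d. H = principal_ideal d \<alpha>)"
proof
  assume "\<exists>\<alpha>\<in>Kfield d. H = principal_ideal d \<alpha>"
  then obtain \<alpha> where \<alpha>: "\<alpha> \<in> Kfield d" and H: "H = principal_ideal d \<alpha>"
    by blast
  have "principal_ideal d (\<alpha> * \<alpha>) = principal_ideal d (Complex (of_rat a) (of_rat b))"
    using assms(6) by (simp add: H ideal_prod_principal_ideal)
  then obtain u v where "u \<in> Ok d" "v \<in> Ok d" "u * v = 1"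
    and "\<alpha> * \<alpha> = Complex (of_rat a) (of_rat b) * u"
    using assms(3) by (rule principal_ideal_eq_imp_associated)
  then have "sqrt ((of_rat a)\<^sup>2 + (of_rat b)\<^sup>2) \<in> Qsqrt d"
    using sqrt_norm_in_Qsqrt_if_square_associated sqrt_squarefree_irrational[OF assms(1,2)] \<alpha>
    by blast
  with assms(4) show False
    by contradiction
qed

end
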